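(* Assume the linear payoff assumption and the rank condition $\operatorname{rank}\begin{bmatrix}A(\nu^* )\\ B(\mu^* )\end{bmatrix}=d$. Let $(a^k,b^k)$, $k=1,\dots,N$, be i.i.d. with $a^k\sim\mu^*$ and $b^k\sim\nu^*$ independent. Let $$\widehat\mu(a)=\frac1N\sum_k\mathbf 1\{a^k=a\},\qquad \widehat\nu(b)=\frac1N\sum_k\mathbf 1\{b^k=b\}$$ be the frequency estimators. Let $\widehat\theta$ be the least-squares minimizer of $$\Big\|\begin{bmatrix}A(\widehat\nu)\\ B(\widehat\mu)\end{bmatrix}\theta-\begin{bmatrix}c(\widehat\mu)\\ d(\widehat\nu)\end{bmatrix}\Big\|^2,$$ and set $\widehat Q(a,b)=\langle\phi(a,b),\widehat\theta\rangle$. Then there is a constant $C>0$, depending only on $\phi,\eta,\mu^*,\nu^*$, with the following property. For every $\delta\in(0,1)$ there is $N_0(\delta)$ such that for all $N\ge N_0(\delta)$, with probability at least $1-\delta$, $$\|\widehat Q-Q\|_F^2\le C\,\frac{m^2+n^2+(m+n)\log(1/\delta)}{N}.$$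
   Context: Let $m,n\ge 2$, $\mathcal A=\{1,\dots,m\}$, $\mathcal B=\{1,\dots,n\}$, and $\eta>0$. For a payoff matrix $Q\in\mathbb{R}^{m\times n}$, the entropy-regularized zero-sum matrix game is $$\max_{\mu\in\Delta(\mathcal A)}\min_{\nu\in\Delta(\mathcal B)}\ \mu^\top Q\nu+\eta^{-1}\mathcal H(\mu)-\eta^{-1}\mathcal H(\nu),\qquad \mathcal H(\pi)=-\sum_i\pi_i\log\pi_i .$$ Its unique saddle point, the quantal response equilibrium (QRE) $(\mu,\nu)$, is characterized by $$\mu(a)=\frac{\exp\big(\eta\sum_b Q(a,b)\nu(b)\big)}{\sum_{a'}\exp\big(\eta\sum_bQ(a',b)\nu(b)\big)},\qquad \nu(b)=\frac{\exp\big(-\eta\sum_a Q(a,b)\mu(a)\big)}{\sum_{b'}\exp\big(-\eta\sum_aQ(a,b')\mu(a)\big)}.$$ Linear payoff assumption: there are a feature map $\phi:\mathcal A\times\mathcal B\to\mathbb{R}^d$ and $\theta^*\in\mathbb{R}^d$ with $\|\theta^*\|^2\le M$ such that $Q(a,b)=\langle\phi(a,b),\theta^*\rangle$ for all $(a,b)$. $(\mu^*,\nu^* )$ denotes the QRE of this $Q$; all its entries are positive. For $\mu\in\Delta(\mathcal A)$ and $\nu\in\Delta(\mathcal B)$ with positive entries, define: - $A(\nu)\in\mathbb{R}^{(m-1)\times d}$, whose row indexed by $a=2,\dots,m$ is $\sum_{b}\nu(b)\,(\phi(a,b)-\phi(1,b))^\top$; - $B(\mu)\in\mathbb{R}^{(n-1)\times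 d}$, whose row indexed by $b=2,\dots,n$ is $\sum_a\mu(a)\,(\phi(a,b)-\phi(a,1))^\top$; - $c(\mu)=\big(\eta^{-1}\log(\mu(a)/\mu(1))\big)_{a=2}^m\in\mathbb{R}^{m-1}$; - $d(\nu)=\big(-\eta^{-1}\log(\nu(b)/\nu(1))\big)_{b=2}^n\in\mathbb{R}^{n-1}$. *)

theory Defs
  imports "HOL-Analysis.Analysis"
begin

text \<open>Action sets are {1..m} and {1..n}; strategies are functions nat => real
  (only their values on the action set matter). Features take values in an
  abstract Euclidean space 'v, so d = DIM('v).\<close>

definition linQ :: "(nat \<Rightarrow> nat \<Rightarrow> 'v::real_inner) \<Rightarrow> 'v \<Rightarrow> nat \<Rightarrow> nat \<Rightarrow> real" where
  "linQ \<phi> \<theta> a b = inner (\<phi> a b) \<theta>"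

definition is_QRE :: "nat \<Rightarrow> nat \<Rightarrow> real \<Rightarrow> (nat \<Rightarrow> nat \<Rightarrow> real) \<Rightarrow>
    (nat \<Rightarrow> real) \<Rightarrow> (nat \<Rightarrow> real) \<Rightarrow> bool" where
  "is_QRE m n \<eta> Q \<mu> \<nu> \<longleftrightarrow>
     (\<forall>a\<in>{1..m}. \<mu> a = exp (\<eta> * (\<Sum>b=1..n. Q a b * \<nu> b)) /
                        (\<Sum>a'=1..m. exp (\<eta> * (\<Sum>b=1..n. Q a' b * \<nu> b)))) \<and>
     (\<forall>b\<in>{1..n}. \<nu> b = exp (- \<eta> * (\<Sum>a=1..m. Q a b * \<mu> a)) /
                        (\<Sum>b'=1..n. exp (- \<eta> * (\<Sum>a=1..m. Q a b' * \<mu> a))))"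

text \<open>Rows of A(nu) (indexed a = 2..m) and of B(mu) (indexed b = 2..n).\<close>
definition rowA :: "nat \<Rightarrow> (nat \<Rightarrow> nat \<Rightarrow> 'v::real_vector) \<Rightarrow> (nat \<Rightarrow> real) \<Rightarrow> nat \<Rightarrow> 'v" where
  "rowA n \<phi> \<nu> a = (\<Sum>b=1..n. \<nu> b *\<^sub>R (\<phi> a b - \<phi> 1 b))"

definition rowB :: "nat \<Rightarrow> (nat \<Rightarrow> nat \<Rightarrow> 'v::real_vector) \<Rightarrow> (nat \<Rightarrow> real) \<Rightarrow> nat \<Rightarrow> 'v" where
  "rowB m \<phi> \<mu> b = (\<Sum>a=1..m. \<mu> a *\<^sub>R (\<phi> a b - \<phi> a 1))"

definition vec_c :: "real \<Rightarrow> (nat \<Rightarrow> real) \<Rightarrow> nat \<Rightarrow> real" where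
  "vec_c \<eta> \<mu> a = ln (\<mu> a / \<mu> 1) / \<eta>"

definition vec_d :: "real \<Rightarrow> (nat \<Rightarrow> real) \<Rightarrow> nat \<Rightarrow> real" where
  "vec_d \<eta> \<nu> b = - (ln (\<nu> b / \<nu> 1) / \<eta>)"

definition stacked_rank :: "nat \<Rightarrow> nat \<Rightarrow> (nat \<Rightarrow> nat \<Rightarrow> 'v::euclidean_space) \<Rightarrow>
    (nat \<Rightarrow> real) \<Rightarrow> (nat \<Rightarrow> real) \<Rightarrow> nat" where
  "stacked_rank m n \<phi> \<mu> \<nu> =
     dim (span (rowA n \<phi> \<nu> ` {2..m} \<union> rowB m \<phi> \<mu> ` {2..n}))"

definition ls_obj :: "nat \<Rightarrow> nat \<Rightarrow> real \<Rightarrow> (nat \<Rightarrow> nat \<Rightarrow> 'v::euclidean_space) \<Rightarrow>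
    (nat \<Rightarrow> real) \<Rightarrow> (nat \<Rightarrow> real) \<Rightarrow> 'v \<Rightarrow> real" where
  "ls_obj m n \<eta> \<phi> \<mu> \<nu> \<theta> =
     (\<Sum>a=2..m. (inner (rowA n \<phi> \<nu> a) \<theta> - vec_c \<eta> \<mu> a)\<^sup>2) +
     (\<Sum>b=2..n. (inner (rowB m \<phi> \<mu> b) \<theta> - vec_d \<eta> \<nu> b)\<^sup>2)"

definition freqA :: "nat \<Rightarrow> (nat \<Rightarrow> nat \<times> nat) \<Rightarrow> nat \<Rightarrow> real" where
  "freqA N s a = real (card {k\<in>{..<N}. fst (s k) = a}) / real N"

definition freqB :: "nat \<Rightarrow> (nat \<Rightarrow> nat \<times> nat) \<Rightarrow> nat \<Rightarrow> real" where
  "freqB N s b = real (card {k\<in>{..<N}. snd (s k) = b}) / real N"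

definition frob_dist2 :: "nat \<Rightarrow> nat \<Rightarrow> (nat \<Rightarrow> nat \<Rightarrow> real) \<Rightarrow> (nat \<Rightarrow> nat \<Rightarrow> real) \<Rightarrow> real" where
  "frob_dist2 m n P Q = (\<Sum>a=1..m. \<Sum>b=1..n. (P a b - Q a b)\<^sup>2)"

text \<open>Probability of an event E under N i.i.d. draws (a^k, b^k), with a^k ~ mu
  and b^k ~ nu independent: the product distribution on the finite sample
  space {..<N} ->_E ({1..m} x {1..n}).\<close>
definition iid_prob :: "nat \<Rightarrow> nat \<Rightarrow> nat \<Rightarrow> (nat \<Rightarrow> real) \<Rightarrow> (nat \<Rightarrow> real) \<Rightarrow>
    ((nat \<Rightarrow> nat \<times> nat) \<Rightarrow> bool) \<Rightarrow> real" where
  "iid_prob m n N \<mu> \<nu> E =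
     (\<Sum>s\<in>{s \<in> {..<N} \<rightarrow>\<^sub>E ({1..m} \<times> {1..n}). E s}.
        \<Prod>k<N. \<mu> (fst (s k)) * \<nu> (snd (s k)))"

end

theory Submission
  imports Defs
begin

text \<open>
  Taking log-ratios against the first action turns the QRE equations into the linear system
  A(nu*) theta* = c(mu*), B(mu*) theta* = d(nu*). Under the rank condition its rows span the
  parameter space, so the Gram form of the system is bounded below by some kappa > 0 and theta*
  is determined by (mu*, nu*) alone; this is why the constant need not depend on theta*.
  If the empirical marginals are within t of (mu*, nu*), the rows move by O(t) and, as long as
  t is small against the smallest equilibrium probability, so do the log-ratio targets. For t
  also small against kappa the perturbed Gram form stays above kappa/4, and every least-squares
  minimiser lies within O(t) of theta*, so the squared Frobenius error is O(t^2).
  A Chernoff bound for each of the m + n frequencies and a union bound show that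
  t = sqrt (4 ln (2 (m + n) / delta) / N) is achieved with probability at least 1 - delta,
  which is the claimed rate.
\<close>

section \<open>Least squares with a perturbed design\<close>

definition lsq_residual :: "'i set \<Rightarrow> ('i \<Rightarrow> 'v::real_inner) \<Rightarrow> ('i \<Rightarrow> real) \<Rightarrow> 'v \<Rightarrow> real" where
  "lsq_residual I r c \<theta> = (\<Sum>i\<in>I. (r i \<bullet> \<theta> - c i)\<^sup>2)"

lemma square_diff_le: "((x::real) - y)\<^sup>2 \<le> 2 * x\<^sup>2 + 2 * y\<^sup>2"
  using zero_le_power2[of "x + y"] by (simp add: power2_eq_square algebra_simps)

lemma inner_square_le: "(x \<bullet> y)\<^sup>2 \<le> (norm x)\<^sup>2 * (norm y)\<^sup>2"
  by (metis Cauchy_Schwarz_ineq power2_norm_eq_inner)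

definition gram_bounded_below :: "'i set \<Rightarrow> ('i \<Rightarrow> 'v::real_inner) \<Rightarrow> real \<Rightarrow> bool" where
  "gram_bounded_below I r \<kappa> \<longleftrightarrow> (\<forall>v. \<kappa> * (norm v)\<^sup>2 \<le> (\<Sum>i\<in>I. (r i \<bullet> v)\<^sup>2))"

lemma span_UNIV_imp_gram_bounded_below:
  fixes r :: "'i \<Rightarrow> 'v::euclidean_space"
  assumes "finite I" and "span (r ` I) = UNIV"
  obtains \<kappa> where "\<kappa> > 0" and "gram_bounded_below I r \<kappa>"
proof -
  let ?q = "\<lambda>v. \<Sum>i\<in>I. (r i \<bullet> v)\<^sup>2"
  have "continuous_on (sphere 0 1) ?q"
    by (intro continuous_intros)
  moreover have "sphere (0::'v) 1 \<noteq> {}"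
    by simp
  ultimately obtain u where u: "u \<in> sphere 0 1" and u_min: "\<forall>v\<in>sphere 0 1. ?q u \<le> ?q v"
    using continuous_attains_inf[OF compact_sphere] by blast
  have "?q u > 0"
  proof (rule ccontr)
    assume "\<not> ?q u > 0"
    moreover have "?q u \<ge> 0"
      by (simp add: sum_nonneg)
    ultimately have "?q u = 0"
      by linarith
    then have "\<forall>i\<in>I. r i \<bullet> u = 0"
      using assms(1) by (simp add: sum_nonneg_eq_0_iff)
    then have "orthogonal u u"
      by (intro orthogonal_to_span[of u "r ` I"]) (auto simp: assms(2) orthogonal_def inner_commute)
    then show False
      using u by (simp add: orthogonal_def)
  qed
  moreover have "?q u * (norm v)\<^sup>2 \<le> ?q v" for v
  proof (cases "v = 0")
    case False
    then have "v /\<^sub>R norm v \<in> sphere 0 1"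
      by simp
    then have "?q u \<le> ?q (v /\<^sub>R norm v)"
      using u_min by blast
    also have "\<dots> = ?q v / (norm v)\<^sup>2"
      unfolding sum_divide_distrib
      by (rule sum.cong) (simp_all add: power_mult_distrib power_inverse divide_inverse mult.commute)
    finally show ?thesis
      using False by (simp add: pos_le_divide_eq)
  qed simp
  ultimately show thesis
    by (intro that) (auto simp: gram_bounded_below_def)
qed

lemma gram_bounded_below_perturb:
  fixes r rh :: "'i \<Rightarrow> 'v::real_inner"
  assumes "gram_bounded_below I r \<kappa>" and "(\<Sum>i\<in>I. (norm (rh i - r i))\<^sup>2) \<le> \<kappa> / 4"
  shows "gram_bounded_below I rh (\<kappa> / 4)"
  unfolding gram_bounded_below_def
proof
  fix v :: 'v
  have "(r i \<bullet> v)\<^sup>2 \<le> 2 * (rh i \<bullet> v)\<^sup>2 + 2 * ((norm (rh i - r i))\<^sup>2 * (norm v)\<^sup>2)" for i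
    using square_diff_le[of "rh i \<bullet> v" "(rh i - r i) \<bullet> v"] inner_square_le[of "rh i - r i" v]
    by (simp add: inner_diff_left)
  then have "\<kappa> * (norm v)\<^sup>2 \<le> (\<Sum>i\<in>I. 2 * (rh i \<bullet> v)\<^sup>2 + 2 * ((norm (rh i - r i))\<^sup>2 * (norm v)\<^sup>2))"
    using assms(1) unfolding gram_bounded_below_def by (meson order_trans sum_mono)
  also have "\<dots> = 2 * (\<Sum>i\<in>I. (rh i \<bullet> v)\<^sup>2) + 2 * (\<Sum>i\<in>I. (norm (rh i - r i))\<^sup>2) * (norm v)\<^sup>2"
    by (simp add: sum.distrib sum_distrib_left sum_distrib_right mult.assoc)
  also have "\<dots> \<le> 2 * (\<Sum>i\<in>I. (rh i \<bullet> v)\<^sup>2) + 2 * (\<kappa> / 4) * (norm v)\<^sup>2"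
    using mult_right_mono[OF assms(2), of "(norm v)\<^sup>2"] by simp
  finally show "\<kappa> / 4 * (norm v)\<^sup>2 \<le> (\<Sum>i\<in>I. (rh i \<bullet> v)\<^sup>2)"
    by simp
qed

lemma lsq_minimizer_dist:
  fixes rh :: "'i \<Rightarrow> 'v::real_inner"
  assumes "\<kappa> > 0" and "gram_bounded_below I rh \<kappa>"
    and "\<And>\<theta>'. lsq_residual I rh ch \<theta>h \<le> lsq_residual I rh ch \<theta>'"
  shows "(norm (\<theta>h - \<theta>))\<^sup>2 \<le> 4 / \<kappa> * lsq_residual I rh ch \<theta>"
proof -
  have "(rh i \<bullet> (\<theta>h - \<theta>))\<^sup>2 \<le> 2 * (rh i \<bullet> \<theta>h - ch i)\<^sup>2 + 2 * (rh i \<bullet> \<theta> - ch i)\<^sup>2" for i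
    using square_diff_le[of "rh i \<bullet> \<theta>h - ch i" "rh i \<bullet> \<theta> - ch i"] by (simp add: inner_diff_right)
  then have "\<kappa> * (norm (\<theta>h - \<theta>))\<^sup>2 \<le> 2 * lsq_residual I rh ch \<theta>h + 2 * lsq_residual I rh ch \<theta>"
    using assms(2) unfolding gram_bounded_below_def lsq_residual_def sum_distrib_left sum.distrib[symmetric]
    by (meson order_trans sum_mono)
  also have "\<dots> \<le> 4 * lsq_residual I rh ch \<theta>"
    using assms(3)[of \<theta>] by simp
  finally show ?thesis
    using assms(1) by (simp add: field_simps)
qed

lemma lsq_residual_perturb:
  fixes r rh :: "'i \<Rightarrow> 'v::real_inner"
  assumes "\<And>i. i \<in> I \<Longrightarrow> r i \<bullet> \<theta> = c i"
  shows "lsq_residual I rh ch \<theta>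
           \<le> 2 * (norm \<theta>)\<^sup>2 * (\<Sum>i\<in>I. (norm (rh i - r i))\<^sup>2) + 2 * (\<Sum>i\<in>I. (ch i - c i)\<^sup>2)"
proof -
  have "(rh i \<bullet> \<theta> - ch i)\<^sup>2 \<le> 2 * ((norm (rh i - r i))\<^sup>2 * (norm \<theta>)\<^sup>2) + 2 * (ch i - c i)\<^sup>2"
    if "i \<in> I" for i
    using square_diff_le[of "(rh i - r i) \<bullet> \<theta>" "ch i - c i"] inner_square_le[of "rh i - r i" \<theta>]
      assms[OF that] by (simp add: inner_diff_left)
  then show ?thesis
    unfolding lsq_residual_def
    by (force simp: sum_distrib_left sum_distrib_right sum.distrib[symmetric] mult_ac intro: sum_mono)
qed

lemma lsq_minimizer_stability:
  fixes r rh :: "'i \<Rightarrow> 'v::real_inner"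
  assumes "\<kappa> > 0" "gram_bounded_below I r \<kappa>"
    and "\<And>i. i \<in> I \<Longrightarrow> r i \<bullet> \<theta> = c i"
    and "(\<Sum>i\<in>I. (norm (rh i - r i))\<^sup>2) \<le> \<kappa> / 4"
    and "\<And>\<theta>'. lsq_residual I rh ch \<theta>h \<le> lsq_residual I rh ch \<theta>'"
  shows "(norm (\<theta>h - \<theta>))\<^sup>2
           \<le> 32 / \<kappa> * ((norm \<theta>)\<^sup>2 * (\<Sum>i\<in>I. (norm (rh i - r i))\<^sup>2) + (\<Sum>i\<in>I. (ch i - c i)\<^sup>2))"
proof -
  have "(norm (\<theta>h - \<theta>))\<^sup>2 \<le> 4 / (\<kappa> / 4) * lsq_residual I rh ch \<theta>"
    using assms(1) gram_bounded_below_perturb[OF assms(2,4)] by (intro lsq_minimizer_dist assms(5)) auto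
  also have "\<dots> \<le> 4 / (\<kappa> / 4) * (2 * (norm \<theta>)\<^sup>2 * (\<Sum>i\<in>I. (norm (rh i - r i))\<^sup>2) + 2 * (\<Sum>i\<in>I. (ch i - c i)\<^sup>2))"
    using assms(1) lsq_residual_perturb[of I r \<theta> c rh ch] assms(3) by (intro mult_left_mono) auto
  finally show ?thesis
    by (simp add: algebra_simps)
qed

section \<open>The QRE as a linear system\<close>

lemma softmax_pos:
  fixes f :: "'a \<Rightarrow> real"
  assumes "finite A" "\<And>x. x \<in> A \<Longrightarrow> p x = exp (f x) / (\<Sum>y\<in>A. exp (f y))" "x \<in> A"
  shows "p x > 0"
proof -
  have "(\<Sum>y\<in>A. exp (f y)) > 0"
    using assms by (intro sum_pos) auto
  then show ?thesis
    using assms(2,3) by simp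
qed

lemma softmax_sum:
  fixes f :: "'a \<Rightarrow> real"
  assumes "finite A" "A \<noteq> {}" "\<And>x. x \<in> A \<Longrightarrow> p x = exp (f x) / (\<Sum>y\<in>A. exp (f y))"
  shows "sum p A = 1"
proof -
  have "(\<Sum>y\<in>A. exp (f y)) > 0"
    using assms by (intro sum_pos) auto
  then show ?thesis
    using assms(3) by (simp add: sum_divide_distrib[symmetric])
qed

lemma softmax_log_ratio:
  fixes f :: "'a \<Rightarrow> real"
  assumes "finite A" "\<And>x. x \<in> A \<Longrightarrow> p x = exp (f x) / (\<Sum>y\<in>A. exp (f y))" "x \<in> A" "y \<in> A"
  shows "ln (p x / p y) = f x - f y"
proof -
  have "(\<Sum>y\<in>A. exp (f y)) > 0"
    using assms by (intro sum_pos) auto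
  then have "p x / p y = exp (f x - f y)"
    using assms by (simp add: exp_diff)
  then show ?thesis
    by simp
qed

lemma is_QRE_softmax:
  assumes "is_QRE m n \<eta> Q \<mu> \<nu>"
  shows "\<And>a. a \<in> {1..m} \<Longrightarrow> \<mu> a = exp (\<eta> * (\<Sum>b=1..n. Q a b * \<nu> b)) /
                        (\<Sum>a'=1..m. exp (\<eta> * (\<Sum>b=1..n. Q a' b * \<nu> b)))"
    and "\<And>b. b \<in> {1..n} \<Longrightarrow> \<nu> b = exp (- \<eta> * (\<Sum>a=1..m. Q a b * \<mu> a)) /
                        (\<Sum>b'=1..n. exp (- \<eta> * (\<Sum>a=1..m. Q a b' * \<mu> a)))"
  using assms unfolding is_QRE_def by blast+

lemma is_QRE_simplex:
  assumes "is_QRE m n \<eta> Q \<mu> \<nu>" "m \<ge> 1" "n \<ge> 1"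
  shows "\<And>a. a \<in> {1..m} \<Longrightarrow> \<mu> a > 0" "(\<Sum>a=1..m. \<mu> a) = 1"
    and "\<And>b. b \<in> {1..n} \<Longrightarrow> \<nu> b > 0" "(\<Sum>b=1..n. \<nu> b) = 1"
proof -
  note \<mu> = is_QRE_softmax(1)[OF assms(1)] and \<nu> = is_QRE_softmax(2)[OF assms(1)]
  show "\<And>a. a \<in> {1..m} \<Longrightarrow> \<mu> a > 0" "\<And>b. b \<in> {1..n} \<Longrightarrow> \<nu> b > 0"
    by (rule softmax_pos[OF _ \<mu>] softmax_pos[OF _ \<nu>]; simp)+
  show "(\<Sum>a=1..m. \<mu> a) = 1"
    using assms(2) by (intro softmax_sum[OF _ _ \<mu>]) auto
  show "(\<Sum>b=1..n. \<nu> b) = 1"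
    using assms(3) by (intro softmax_sum[OF _ _ \<nu>]) auto
qed

lemma is_QRE_lower_bound:
  assumes "is_QRE m n \<eta> Q \<mu> \<nu>" "m \<ge> 1" "n \<ge> 1"
  obtains p where "p > 0" "\<And>a. a \<in> {1..m} \<Longrightarrow> p \<le> \<mu> a" "\<And>b. b \<in> {1..n} \<Longrightarrow> p \<le> \<nu> b"
proof
  show "Min (\<mu> ` {1..m} \<union> \<nu> ` {1..n}) > 0"
    using is_QRE_simplex[OF assms] assms(2) by (auto simp: Min_gr_iff)
qed auto

lemma rowA_inner:
  "rowA n \<phi> \<nu> a \<bullet> \<theta> = (\<Sum>b=1..n. linQ \<phi> \<theta> a b * \<nu> b) - (\<Sum>b=1..n. linQ \<phi> \<theta> 1 b * \<nu> b)"
  unfolding rowA_def linQ_def inner_sum_left sum_subtractf[symmetric]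
  by (rule sum.cong) (simp_all add: inner_diff_left algebra_simps)

lemma rowB_inner:
  "rowB m \<phi> \<mu> b \<bullet> \<theta> = (\<Sum>a=1..m. linQ \<phi> \<theta> a b * \<mu> a) - (\<Sum>a=1..m. linQ \<phi> \<theta> a 1 * \<mu> a)"
  unfolding rowB_def linQ_def inner_sum_left sum_subtractf[symmetric]
  by (rule sum.cong) (simp_all add: inner_diff_left algebra_simps)

lemma is_QRE_linear_system:
  assumes "is_QRE m n \<eta> (linQ \<phi> \<theta>) \<mu> \<nu>" "\<eta> > 0"
  shows "\<And>a. a \<in> {2..m} \<Longrightarrow> rowA n \<phi> \<nu> a \<bullet> \<theta> = vec_c \<eta> \<mu> a"
    and "\<And>b. b \<in> {2..n} \<Longrightarrow> rowB m \<phi> \<mu> b \<bullet> \<theta> = vec_d \<eta> \<nu> b"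
proof -
  fix a assume "a \<in> {2..m}"
  then have "ln (\<mu> a / \<mu> 1) = \<eta> * (\<Sum>b=1..n. linQ \<phi> \<theta> a b * \<nu> b) - \<eta> * (\<Sum>b=1..n. linQ \<phi> \<theta> 1 b * \<nu> b)"
    by (intro softmax_log_ratio[OF _ is_QRE_softmax(1)[OF assms(1)]]) auto
  then show "rowA n \<phi> \<nu> a \<bullet> \<theta> = vec_c \<eta> \<mu> a"
    using assms(2) by (simp add: vec_c_def rowA_inner right_diff_distrib[symmetric])
next
  fix b assume "b \<in> {2..n}"
  then have "ln (\<nu> b / \<nu> 1) = - \<eta> * (\<Sum>a=1..m. linQ \<phi> \<theta> a b * \<mu> a) - - \<eta> * (\<Sum>a=1..m. linQ \<phi> \<theta> a 1 * \<mu> a)"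
    by (intro softmax_log_ratio[OF _ is_QRE_softmax(2)[OF assms(1)]]) auto
  then show "rowB m \<phi> \<mu> b \<bullet> \<theta> = vec_d \<eta> \<nu> b"
    using assms(2) by (simp add: vec_d_def rowB_inner right_diff_distrib[symmetric])
qed

definition stacked_row :: "nat \<Rightarrow> nat \<Rightarrow> (nat \<Rightarrow> nat \<Rightarrow> 'v::real_vector) \<Rightarrow>
    (nat \<Rightarrow> real) \<Rightarrow> (nat \<Rightarrow> real) \<Rightarrow> nat + nat \<Rightarrow> 'v" where
  "stacked_row m n \<phi> \<mu> \<nu> = case_sum (rowA n \<phi> \<nu>) (rowB m \<phi> \<mu>)"

definition stacked_target :: "real \<Rightarrow> (nat \<Rightarrow> real) \<Rightarrow> (nat \<Rightarrow> real) \<Rightarrow> nat + nat \<Rightarrow> real" where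
  "stacked_target \<eta> \<mu> \<nu> = case_sum (vec_c \<eta> \<mu>) (vec_d \<eta> \<nu>)"

lemma ls_obj_eq_lsq_residual:
  "ls_obj m n \<eta> \<phi> \<mu> \<nu> \<theta> =
     lsq_residual ({2..m} <+> {2..n}) (stacked_row m n \<phi> \<mu> \<nu>) (stacked_target \<eta> \<mu> \<nu>) \<theta>"
  unfolding ls_obj_def lsq_residual_def by (simp add: sum.Plus stacked_row_def stacked_target_def)

lemma stacked_rank_full_imp_span:
  fixes \<phi> :: "nat \<Rightarrow> nat \<Rightarrow> 'v::euclidean_space"
  assumes "stacked_rank m n \<phi> \<mu> \<nu> = DIM('v)"
  shows "span (stacked_row m n \<phi> \<mu> \<nu> ` ({2..m} <+> {2..n})) = UNIV"
proof -
  have "stacked_row m n \<phi> \<mu> \<nu> ` ({2..m} <+> {2..n}) = rowA n \<phi> \<nu> ` {2..m} \<union> rowB m \<phi> \<mu> ` {2..n}"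
    by (auto simp: stacked_row_def Plus_def image_Un image_image)
  with assms show ?thesis
    by (simp add: stacked_rank_def dim_eq_full)
qed

lemma is_QRE_stacked_system:
  assumes "is_QRE m n \<eta> (linQ \<phi> \<theta>) \<mu> \<nu>" "\<eta> > 0" "i \<in> {2..m} <+> {2..n}"
  shows "stacked_row m n \<phi> \<mu> \<nu> i \<bullet> \<theta> = stacked_target \<eta> \<mu> \<nu> i"
  using assms(3) is_QRE_linear_system[OF assms(1,2)]
  by (auto simp: stacked_row_def stacked_target_def)

lemma is_QRE_parameter_unique:
  fixes \<phi> :: "nat \<Rightarrow> nat \<Rightarrow> 'v::euclidean_space"
  assumes "stacked_rank m n \<phi> \<mu> \<nu> = DIM('v)" "\<eta> > 0"
    and "is_QRE m n \<eta> (linQ \<phi> \<theta>1) \<mu> \<nu>" "is_QRE m n \<eta> (linQ \<phi> \<theta>2) \<mu> \<nu>"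
  shows "\<theta>1 = \<theta>2"
proof -
  let ?R = "stacked_row m n \<phi> \<mu> \<nu> ` ({2..m} <+> {2..n})"
  have "\<forall>y\<in>?R. orthogonal (\<theta>1 - \<theta>2) y"
    using is_QRE_stacked_system[OF assms(3,2)] is_QRE_stacked_system[OF assms(4,2)]
    by (auto simp: orthogonal_def inner_diff_left inner_commute)
  then have "orthogonal (\<theta>1 - \<theta>2) (\<theta>1 - \<theta>2)"
    using orthogonal_to_span stacked_rank_full_imp_span[OF assms(1)] by blast
  then show ?thesis
    by (simp add: orthogonal_def)
qed

section \<open>Stability of the least-squares estimator\<close>

definition feature_spread :: "nat \<Rightarrow> nat \<Rightarrow> (nat \<Rightarrow> nat \<Rightarrow> 'v::real_normed_vector) \<Rightarrow> real" where
  "feature_spread m n \<phi> = (\<Sum>a=1..m. \<Sum>b=1..n. norm (\<phi> a b - \<phi> 1 b) + norm (\<phi> a b - \<phi> a 1))"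

lemma rowB_eq_rowA_transpose: "rowB m \<phi> \<mu> = rowA m (\<lambda>b a. \<phi> a b) \<mu>"
  unfolding rowA_def rowB_def by simp

lemma rowA_lipschitz:
  assumes "\<And>b. b \<in> {1..n} \<Longrightarrow> \<bar>\<nu>' b - \<nu> b\<bar> \<le> t"
  shows "norm (rowA n \<phi> \<nu>' a - rowA n \<phi> \<nu> a) \<le> t * (\<Sum>b=1..n. norm (\<phi> a b - \<phi> 1 b))"
proof -
  have "norm (rowA n \<phi> \<nu>' a - rowA n \<phi> \<nu> a) = norm (\<Sum>b=1..n. (\<nu>' b - \<nu> b) *\<^sub>R (\<phi> a b - \<phi> 1 b))"
    unfolding rowA_def by (simp add: sum_subtractf[symmetric] scaleR_diff_left)
  also have "\<dots> \<le> (\<Sum>b=1..n. \<bar>\<nu>' b - \<nu> b\<bar> * norm (\<phi> a b - \<phi> 1 b))"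
    by (rule norm_sum[THEN order_trans]) simp
  also have "\<dots> \<le> (\<Sum>b=1..n. t * norm (\<phi> a b - \<phi> 1 b))"
    using assms by (intro sum_mono mult_right_mono) auto
  finally show ?thesis
    by (simp add: sum_distrib_left)
qed

lemma stacked_row_lipschitz:
  assumes "\<And>a. a \<in> {1..m} \<Longrightarrow> \<bar>\<mu>' a - \<mu> a\<bar> \<le> t" "\<And>b. b \<in> {1..n} \<Longrightarrow> \<bar>\<nu>' b - \<nu> b\<bar> \<le> t"
    and "t \<ge> 0" "i \<in> {2..m} <+> {2..n}"
  shows "norm (stacked_row m n \<phi> \<mu>' \<nu>' i - stacked_row m n \<phi> \<mu> \<nu> i) \<le> t * feature_spread m n \<phi>"
proof (cases i)
  case (Inl a)
  with assms(4) have a: "a \<in> {1..m}"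
    by auto
  have "norm (rowA n \<phi> \<nu>' a - rowA n \<phi> \<nu> a) \<le> t * (\<Sum>b=1..n. norm (\<phi> a b - \<phi> 1 b))"
    by (rule rowA_lipschitz) (rule assms(2))
  also have "\<dots> \<le> t * (\<Sum>b=1..n. norm (\<phi> a b - \<phi> 1 b) + norm (\<phi> a b - \<phi> a 1))"
    using assms(3) by (intro mult_left_mono sum_mono) auto
  also have "\<dots> \<le> t * feature_spread m n \<phi>"
    unfolding feature_spread_def using a assms(3)
    by (intro mult_left_mono member_le_sum[of a "{1..m}" "\<lambda>a. \<Sum>b=1..n. _ a b"] sum_nonneg) auto
  finally show ?thesis
    using Inl by (simp add: stacked_row_def)
next
  case (Inr b)
  with assms(4) have b: "b \<in> {1..n}"
    by auto
  have "norm (rowA m (\<lambda>b a. \<phi> a b) \<mu>' b - rowA m (\<lambda>b a. \<phi> a b) \<mu> b)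
          \<le> t * (\<Sum>a=1..m. norm (\<phi> a b - \<phi> a 1))"
    by (rule rowA_lipschitz) (rule assms(1))
  also have "\<dots> \<le> t * feature_spread m n \<phi>"
  proof -
    have "norm (\<phi> a b - \<phi> a 1) \<le> (\<Sum>b'=1..n. norm (\<phi> a b' - \<phi> 1 b') + norm (\<phi> a b' - \<phi> a 1))" for a
      using b by (intro order_trans[OF _ member_le_sum[of b]]) auto
    then show ?thesis
      unfolding feature_spread_def using assms(3) by (intro mult_left_mono sum_mono) auto
  qed
  finally show ?thesis
    using Inr by (simp add: stacked_row_def rowB_eq_rowA_transpose)
qed

lemma abs_ln_diff_le:
  fixes x y p t :: real
  assumes "p > 0" "x \<ge> p / 2" "y \<ge> p / 2" "\<bar>x - y\<bar> \<le> t"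
  shows "\<bar>ln x - ln y\<bar> \<le> 2 * t / p"
proof -
  have "ln u - ln v \<le> 2 * t / p" if "u \<ge> p / 2" "v \<ge> p / 2" "\<bar>u - v\<bar> \<le> t" for u v
  proof -
    have "ln u - ln v \<le> (u - v) / v"
      using that assms(1) by (intro ln_diff_le) auto
    also have "\<dots> \<le> t / v"
      using that assms(1) by (intro divide_right_mono) auto
    also have "\<dots> \<le> t / (p / 2)"
      using that assms(1) by (intro divide_left_mono) (auto intro: order_trans[OF abs_ge_zero])
    finally show ?thesis
      by (simp add: mult.commute)
  qed
  from this[of x y] this[of y x] show ?thesis
    using assms by (auto simp: abs_minus_commute)
qed

lemma vec_c_lipschitz:
  assumes "\<eta> > 0" "p > 0" "t \<le> p / 2" "\<mu> a \<ge> p" "\<mu> 1 \<ge> p"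
    and "\<bar>\<mu>' a - \<mu> a\<bar> \<le> t" "\<bar>\<mu>' 1 - \<mu> 1\<bar> \<le> t"
  shows "\<bar>vec_c \<eta> \<mu>' a - vec_c \<eta> \<mu> a\<bar> \<le> 4 * t / (\<eta> * p)"
proof -
  have pos: "\<mu> a > 0" "\<mu> 1 > 0" "\<mu>' a > 0" "\<mu>' 1 > 0"
    using assms(2-7) by auto
  have "\<bar>ln (\<mu>' a) - ln (\<mu> a)\<bar> \<le> 2 * t / p" "\<bar>ln (\<mu>' 1) - ln (\<mu> 1)\<bar> \<le> 2 * t / p"
    using assms(2-7) by (intro abs_ln_diff_le; simp)+
  then have bound: "\<bar>(ln (\<mu>' a) - ln (\<mu> a)) - (ln (\<mu>' 1) - ln (\<mu> 1))\<bar> \<le> 4 * t / p"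
    by linarith
  have "vec_c \<eta> \<mu>' a - vec_c \<eta> \<mu> a = ((ln (\<mu>' a) - ln (\<mu> a)) - (ln (\<mu>' 1) - ln (\<mu> 1))) / \<eta>"
    using pos by (simp add: vec_c_def ln_div diff_divide_distrib)
  then have "\<bar>vec_c \<eta> \<mu>' a - vec_c \<eta> \<mu> a\<bar> = \<bar>(ln (\<mu>' a) - ln (\<mu> a)) - (ln (\<mu>' 1) - ln (\<mu> 1))\<bar> / \<eta>"
    by (simp only: abs_divide abs_of_pos[OF assms(1)])
  also have "\<dots> \<le> (4 * t / p) / \<eta>"
    using bound assms(1) by (intro divide_right_mono) auto
  finally show ?thesis
    by (simp add: mult.commute)
qed

lemma vec_d_eq_uminus_vec_c: "vec_d \<eta> \<nu> b = - vec_c \<eta> \<nu> b"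
  by (simp add: vec_d_def vec_c_def)

lemma stacked_target_lipschitz:
  assumes "\<eta> > 0" "p > 0" "t \<le> p / 2"
    and "\<And>a. a \<in> {1..m} \<Longrightarrow> \<mu> a \<ge> p" "\<And>b. b \<in> {1..n} \<Longrightarrow> \<nu> b \<ge> p"
    and "\<And>a. a \<in> {1..m} \<Longrightarrow> \<bar>\<mu>' a - \<mu> a\<bar> \<le> t" "\<And>b. b \<in> {1..n} \<Longrightarrow> \<bar>\<nu>' b - \<nu> b\<bar> \<le> t"
    and "i \<in> {2..m} <+> {2..n}"
  shows "\<bar>stacked_target \<eta> \<mu>' \<nu>' i - stacked_target \<eta> \<mu> \<nu> i\<bar> \<le> 4 * t / (\<eta> * p)"
proof (cases i)
  case (Inl a)
  with assms(8) have "a \<in> {1..m}" "1 \<in> {1..m}"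
    by auto
  with Inl assms(1-3) show ?thesis
    by (auto simp: stacked_target_def intro!: vec_c_lipschitz assms(4,6))
next
  case (Inr b)
  with assms(8) have "b \<in> {1..n}" "1 \<in> {1..n}"
    by auto
  then have "\<bar>vec_c \<eta> \<nu>' b - vec_c \<eta> \<nu> b\<bar> \<le> 4 * t / (\<eta> * p)"
    using assms(1-3) by (intro vec_c_lipschitz assms(5,7))
  with Inr show ?thesis
    by (simp add: stacked_target_def vec_d_eq_uminus_vec_c abs_minus_commute)
qed

lemma sum_stacked_le:
  assumes "\<And>i. i \<in> {2..m} <+> {2..n} \<Longrightarrow> f i \<le> B" "B \<ge> 0"
  shows "(\<Sum>i\<in>{2..m} <+> {2..n}. f i) \<le> real (m + n) * B"
proof -
  have "(\<Sum>i\<in>{2..m} <+> {2..n}. f i) \<le> real (card ({2..m} <+> {2..n})) * B"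
    using assms(1) by (rule sum_bounded_above)
  also have "\<dots> \<le> real (m + n) * B"
    using assms(2) by (intro mult_right_mono) (auto simp: card_Plus)
  finally show ?thesis .
qed

definition close_profiles :: "nat \<Rightarrow> nat \<Rightarrow> (nat \<Rightarrow> real) \<Rightarrow> (nat \<Rightarrow> real) \<Rightarrow>
    (nat \<Rightarrow> real) \<Rightarrow> (nat \<Rightarrow> real) \<Rightarrow> real \<Rightarrow> bool" where
  "close_profiles m n \<mu> \<nu> \<mu>' \<nu>' t \<longleftrightarrow>
     (\<forall>a\<in>{1..m}. \<bar>\<mu>' a - \<mu> a\<bar> \<le> t) \<and> (\<forall>b\<in>{1..n}. \<bar>\<nu>' b - \<nu> b\<bar> \<le> t)"

lemma stacked_rows_perturbation:
  assumes "close_profiles m n \<mu> \<nu> \<mu>' \<nu>' t" "t \<ge> 0"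
  shows "(\<Sum>i\<in>{2..m} <+> {2..n}. (norm (stacked_row m n \<phi> \<mu>' \<nu>' i - stacked_row m n \<phi> \<mu> \<nu> i))\<^sup>2)
           \<le> real (m + n) * (t * feature_spread m n \<phi>)\<^sup>2"
  using assms stacked_row_lipschitz[of m \<mu>' \<mu> t n \<nu>' \<nu>]
  by (intro sum_stacked_le) (auto simp: close_profiles_def intro!: power_mono)

lemma stacked_targets_perturbation:
  assumes "\<eta> > 0" "p > 0" "\<And>a. a \<in> {1..m} \<Longrightarrow> p \<le> \<mu> a" "\<And>b. b \<in> {1..n} \<Longrightarrow> p \<le> \<nu> b"
    and "close_profiles m n \<mu> \<nu> \<mu>' \<nu>' t" "t \<le> p / 2"
  shows "(\<Sum>i\<in>{2..m} <+> {2..n}. (stacked_target \<eta> \<mu>' \<nu>' i - stacked_target \<eta> \<mu> \<nu> i)\<^sup>2)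
           \<le> real (m + n) * (4 * t / (\<eta> * p))\<^sup>2"
proof (rule sum_stacked_le)
  fix i assume "i \<in> {2..m} <+> {2..n}"
  then have "\<bar>stacked_target \<eta> \<mu>' \<nu>' i - stacked_target \<eta> \<mu> \<nu> i\<bar> \<le> 4 * t / (\<eta> * p)"
    using assms by (intro stacked_target_lipschitz[OF assms(1,2,6)]) (auto simp: close_profiles_def)
  then show "(stacked_target \<eta> \<mu>' \<nu>' i - stacked_target \<eta> \<mu> \<nu> i)\<^sup>2 \<le> (4 * t / (\<eta> * p))\<^sup>2"
    by (metis abs_ge_zero power2_abs power_mono)
qed simp

lemma frob_dist2_linQ_le:
  "frob_dist2 m n (linQ \<phi> \<theta>1) (linQ \<phi> \<theta>2)
     \<le> (\<Sum>a=1..m. \<Sum>b=1..n. (norm (\<phi> a b))\<^sup>2) * (norm (\<theta>1 - \<theta>2))\<^sup>2"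
proof -
  have "frob_dist2 m n (linQ \<phi> \<theta>1) (linQ \<phi> \<theta>2) = (\<Sum>a=1..m. \<Sum>b=1..n. (\<phi> a b \<bullet> (\<theta>1 - \<theta>2))\<^sup>2)"
    unfolding frob_dist2_def linQ_def by (simp add: inner_diff_right)
  also have "\<dots> \<le> (\<Sum>a=1..m. \<Sum>b=1..n. (norm (\<phi> a b))\<^sup>2 * (norm (\<theta>1 - \<theta>2))\<^sup>2)"
    by (intro sum_mono inner_square_le)
  finally show ?thesis
    by (simp add: sum_distrib_right)
qed

definition ls_estimate_within :: "nat \<Rightarrow> nat \<Rightarrow> real \<Rightarrow> (nat \<Rightarrow> nat \<Rightarrow> 'v::euclidean_space) \<Rightarrow> 'v \<Rightarrow>
    (nat \<Rightarrow> real) \<Rightarrow> (nat \<Rightarrow> real) \<Rightarrow> real \<Rightarrow> bool" where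
  "ls_estimate_within m n \<eta> \<phi> \<theta> \<mu>h \<nu>h B \<longleftrightarrow>
     (\<forall>a\<in>{1..m}. \<mu>h a > 0) \<and> (\<forall>b\<in>{1..n}. \<nu>h b > 0) \<and>
     (\<forall>\<theta>h. (\<forall>\<theta>'. ls_obj m n \<eta> \<phi> \<mu>h \<nu>h \<theta>h \<le> ls_obj m n \<eta> \<phi> \<mu>h \<nu>h \<theta>')
        \<longrightarrow> frob_dist2 m n (linQ \<phi> \<theta>h) (linQ \<phi> \<theta>) \<le> B)"

lemma ls_estimate_within_mono:
  "ls_estimate_within m n \<eta> \<phi> \<theta> \<mu>h \<nu>h B \<Longrightarrow> B \<le> B' \<Longrightarrow> ls_estimate_within m n \<eta> \<phi> \<theta> \<mu>h \<nu>h B'"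
  unfolding ls_estimate_within_def by (meson order_trans)

lemma QRE_least_squares_perturbation:
  fixes \<phi> :: "nat \<Rightarrow> nat \<Rightarrow> 'v::euclidean_space"
  assumes "\<eta> > 0" and qre: "is_QRE m n \<eta> (linQ \<phi> \<theta>) \<mu> \<nu>"
    and gram: "\<kappa> > 0" "gram_bounded_below ({2..m} <+> {2..n}) (stacked_row m n \<phi> \<mu> \<nu>) \<kappa>"
    and p: "p > 0" "\<And>a. a \<in> {1..m} \<Longrightarrow> p \<le> \<mu> a" "\<And>b. b \<in> {1..n} \<Longrightarrow> p \<le> \<nu> b"
    and t: "0 \<le> t" "t \<le> p / 2" "4 * real (m + n) * ((feature_spread m n \<phi>)\<^sup>2 + 1) * t\<^sup>2 \<le> \<kappa>"
    and close: "close_profiles m n \<mu> \<nu> \<mu>h \<nu>h t"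
    and min: "\<And>\<theta>'. ls_obj m n \<eta> \<phi> \<mu>h \<nu>h \<theta>h \<le> ls_obj m n \<eta> \<phi> \<mu>h \<nu>h \<theta>'"
  shows "(norm (\<theta>h - \<theta>))\<^sup>2
           \<le> 32 / \<kappa> * real (m + n) * ((norm \<theta>)\<^sup>2 * (feature_spread m n \<phi>)\<^sup>2 + (4 / (\<eta> * p))\<^sup>2) * t\<^sup>2"
proof -
  let ?I = "{2..m} <+> {2..n}" and ?D = "feature_spread m n \<phi>"
  let ?rows = "\<Sum>i\<in>?I. (norm (stacked_row m n \<phi> \<mu>h \<nu>h i - stacked_row m n \<phi> \<mu> \<nu> i))\<^sup>2"
  let ?targets = "\<Sum>i\<in>?I. (stacked_target \<eta> \<mu>h \<nu>h i - stacked_target \<eta> \<mu> \<nu> i)\<^sup>2"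
  have rows: "?rows \<le> real (m + n) * (t * ?D)\<^sup>2"
    using close t(1) by (rule stacked_rows_perturbation)
  also have "\<dots> \<le> real (m + n) * ((?D\<^sup>2 + 1) * t\<^sup>2)"
    by (intro mult_left_mono) (auto simp: power_mult_distrib algebra_simps)
  finally have small: "?rows \<le> \<kappa> / 4"
    using t(3) by (simp add: algebra_simps)
  have "(norm (\<theta>h - \<theta>))\<^sup>2 \<le> 32 / \<kappa> * ((norm \<theta>)\<^sup>2 * ?rows + ?targets)"
    using is_QRE_stacked_system[OF qre assms(1)] min
    by (intro lsq_minimizer_stability[OF gram _ small]) (auto simp: ls_obj_eq_lsq_residual)
  also have "\<dots> \<le> 32 / \<kappa> * ((norm \<theta>)\<^sup>2 * (real (m + n) * (t * ?D)\<^sup>2) + real (m + n) * (4 * t / (\<eta> * p))\<^sup>2)"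
    using gram(1) rows stacked_targets_perturbation[OF assms(1) p close t(2)]
    by (intro mult_left_mono add_mono) auto
  also have "\<dots> = 32 / \<kappa> * real (m + n) * ((norm \<theta>)\<^sup>2 * ?D\<^sup>2 + (4 / (\<eta> * p))\<^sup>2) * t\<^sup>2"
    using gram(1) assms(1) p(1) by (simp add: power_mult_distrib power_divide field_simps)
  finally show ?thesis .
qed

lemma QRE_least_squares_stability:
  fixes \<phi> :: "nat \<Rightarrow> nat \<Rightarrow> 'v::euclidean_space"
  assumes "m \<ge> 2" "n \<ge> 2" "\<eta> > 0"
    and rank: "stacked_rank m n \<phi> \<mu> \<nu> = DIM('v)"
    and qre: "is_QRE m n \<eta> (linQ \<phi> \<theta>) \<mu> \<nu>"
  obtains K \<epsilon> where "K \<ge> 0" "\<epsilon> > 0"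
    and "\<And>\<mu>h \<nu>h t. 0 \<le> t \<Longrightarrow> t \<le> \<epsilon> \<Longrightarrow> close_profiles m n \<mu> \<nu> \<mu>h \<nu>h t \<Longrightarrow>
           ls_estimate_within m n \<eta> \<phi> \<theta> \<mu>h \<nu>h (K * t\<^sup>2)"
proof -
  obtain \<kappa> where \<kappa>: "\<kappa> > 0" "gram_bounded_below ({2..m} <+> {2..n}) (stacked_row m n \<phi> \<mu> \<nu>) \<kappa>"
    using span_UNIV_imp_gram_bounded_below[OF _ stacked_rank_full_imp_span[OF rank]] by auto
  obtain p where p: "p > 0" "\<And>a. a \<in> {1..m} \<Longrightarrow> p \<le> \<mu> a" "\<And>b. b \<in> {1..n} \<Longrightarrow> p \<le> \<nu> b"
    by (rule is_QRE_lower_bound[OF qre]) (use assms(1,2) in auto)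
  define Z where "Z = 4 * real (m + n) * ((feature_spread m n \<phi>)\<^sup>2 + 1)"
  define \<Phi> where "\<Phi> = (\<Sum>a=1..m. \<Sum>b=1..n. (norm (\<phi> a b))\<^sup>2)"
  define K\<theta> where "K\<theta> = 32 / \<kappa> * real (m + n) * ((norm \<theta>)\<^sup>2 * (feature_spread m n \<phi>)\<^sup>2 + (4 / (\<eta> * p))\<^sup>2)"
  define K where "K = \<Phi> * K\<theta>"
  \<comment> \<open>t \<le> p/2 keeps the perturbed probabilities above p/2, and Z t^2 \<le> \<kappa> keeps the
    perturbed rows within the \<kappa>/4 margin of the Gram bound\<close>
  define \<epsilon> where "\<epsilon> = min (p / 2) (sqrt (\<kappa> / Z))"
  have "Z > 0"
    using assms(1) by (auto simp: Z_def add_nonneg_pos intro!: mult_pos_pos)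
  have "\<Phi> \<ge> 0"
    by (simp add: \<Phi>_def sum_nonneg)
  then have "K \<ge> 0"
    using \<kappa>(1) by (simp add: K_def K\<theta>_def)
  moreover have "\<epsilon> > 0"
    using \<kappa>(1) p(1) \<open>Z > 0\<close> by (simp add: \<epsilon>_def)
  moreover have "ls_estimate_within m n \<eta> \<phi> \<theta> \<mu>h \<nu>h (K * t\<^sup>2)"
    if t: "0 \<le> t" "t \<le> \<epsilon>" and close: "close_profiles m n \<mu> \<nu> \<mu>h \<nu>h t" for \<mu>h \<nu>h t
    unfolding ls_estimate_within_def
  proof (intro conjI allI impI ballI)
    show "\<mu>h a > 0" if "a \<in> {1..m}" for a
      using p(1) p(2)[OF that] close that t(2) by (force simp: \<epsilon>_def close_profiles_def)
    show "\<nu>h b > 0" if "b \<in> {1..n}" for b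
      using p(1) p(3)[OF that] close that t(2) by (force simp: \<epsilon>_def close_profiles_def)
    fix \<theta>h assume "\<forall>\<theta>'. ls_obj m n \<eta> \<phi> \<mu>h \<nu>h \<theta>h \<le> ls_obj m n \<eta> \<phi> \<mu>h \<nu>h \<theta>'"
    moreover have "Z * t\<^sup>2 \<le> \<kappa>"
      using t \<kappa>(1) \<open>Z > 0\<close> power_mono[of t "sqrt (\<kappa> / Z)" 2] by (simp add: \<epsilon>_def field_simps)
    ultimately have "(norm (\<theta>h - \<theta>))\<^sup>2 \<le> K\<theta> * t\<^sup>2"
      unfolding K\<theta>_def using t(2)
      by (intro QRE_least_squares_perturbation[OF assms(3) qre \<kappa> p t(1) _ _ close]) (auto simp: Z_def \<epsilon>_def)
    then have "\<Phi> * (norm (\<theta>h - \<theta>))\<^sup>2 \<le> K * t\<^sup>2"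
      using \<open>\<Phi> \<ge> 0\<close> by (simp add: K_def mult.assoc mult_left_mono)
    then show "frob_dist2 m n (linQ \<phi> \<theta>h) (linQ \<phi> \<theta>) \<le> K * t\<^sup>2"
      using frob_dist2_linQ_le[of m n \<phi> \<theta>h \<theta>] by (simp add: \<Phi>_def)
  qed
  ultimately show thesis
    by (rule that)
qed

section \<open>Concentration of empirical frequencies\<close>

definition iid_prob_on :: "'x set \<Rightarrow> ('x \<Rightarrow> real) \<Rightarrow> nat \<Rightarrow> ((nat \<Rightarrow> 'x) \<Rightarrow> bool) \<Rightarrow> real" where
  "iid_prob_on S w N E = (\<Sum>s\<in>{s \<in> {..<N} \<rightarrow>\<^sub>E S. E s}. \<Prod>k<N. w (s k))"

lemma iid_prob_eq_iid_prob_on: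
  "iid_prob m n N \<mu> \<nu> E = iid_prob_on ({1..m} \<times> {1..n}) (\<lambda>x. \<mu> (fst x) * \<nu> (snd x)) N E"
  unfolding iid_prob_def iid_prob_on_def by simp

lemma iid_prob_on_indicator:
  assumes "finite S"
  shows "iid_prob_on S w N E = (\<Sum>s\<in>{..<N} \<rightarrow>\<^sub>E S. if E s then \<Prod>k<N. w (s k) else 0)"
  unfolding iid_prob_on_def using assms by (simp add: sum.inter_filter finite_PiE)

lemma sum_PiE_prod_eq_power:
  fixes g :: "'x \<Rightarrow> real"
  assumes "finite S"
  shows "(\<Sum>s\<in>{..<N} \<rightarrow>\<^sub>E S. \<Prod>k<N. g (s k)) = (\<Sum>x\<in>S. g x) ^ N"
  using prod_sum_PiE[of "{..<N}" "\<lambda>_. S" "\<lambda>_. g"] assms by simp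

lemma prod_weights_nonneg:
  assumes "\<And>x. x \<in> S \<Longrightarrow> w x \<ge> (0::real)" and "s \<in> {..<N} \<rightarrow>\<^sub>E S"
  shows "(\<Prod>k<N. w (s k)) \<ge> 0"
  using assms by (intro prod_nonneg) (auto simp: PiE_def Pi_def)

lemma iid_prob_on_mono:
  assumes "finite S" "\<And>x. x \<in> S \<Longrightarrow> w x \<ge> 0" "\<And>s. s \<in> {..<N} \<rightarrow>\<^sub>E S \<Longrightarrow> E s \<Longrightarrow> F s"
  shows "iid_prob_on S w N E \<le> iid_prob_on S w N F"
  unfolding iid_prob_on_indicator[OF assms(1)]
  using assms(3) prod_weights_nonneg[where S=S and w=w, OF assms(2)] by (intro sum_mono) auto

lemma iid_prob_mono:
  assumes "\<And>a. a \<in> {1..m} \<Longrightarrow> \<mu> a \<ge> 0" "\<And>b. b \<in> {1..n} \<Longrightarrow> \<nu> b \<ge> 0"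
    and "\<And>s. s \<in> {..<N} \<rightarrow>\<^sub>E {1..m} \<times> {1..n} \<Longrightarrow> E s \<Longrightarrow> F s"
  shows "iid_prob m n N \<mu> \<nu> E \<le> iid_prob m n N \<mu> \<nu> F"
  unfolding iid_prob_eq_iid_prob_on using assms by (intro iid_prob_on_mono) auto

lemma iid_prob_on_union_bound:
  assumes "finite S" "\<And>x. x \<in> S \<Longrightarrow> w x \<ge> 0" "(\<Sum>x\<in>S. w x) = 1" "finite J"
    and "\<And>s. s \<in> {..<N} \<rightarrow>\<^sub>E S \<Longrightarrow> \<not> E s \<Longrightarrow> \<exists>j\<in>J. F j s"
  shows "iid_prob_on S w N E \<ge> 1 - (\<Sum>j\<in>J. iid_prob_on S w N (F j))"
proof -
  let ?W = "\<lambda>s. \<Prod>k<N. w (s k)"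
  have "(if E s then 0 else ?W s) \<le> (\<Sum>j\<in>J. if F j s then ?W s else 0)"
    if s: "s \<in> {..<N} \<rightarrow>\<^sub>E S" for s
  proof (cases "E s")
    case False
    then obtain j where "j \<in> J" "F j s"
      using assms(5)[OF s] by blast
    then show ?thesis
      using False assms(4) prod_weights_nonneg[where S=S and w=w, OF assms(2) s]
      by (intro order_trans[OF _ member_le_sum[of j]]) auto
  qed (use prod_weights_nonneg[where S=S and w=w, OF assms(2) s] in \<open>auto intro: sum_nonneg\<close>)
  then have "(\<Sum>s\<in>{..<N} \<rightarrow>\<^sub>E S. if E s then 0 else ?W s) \<le> (\<Sum>j\<in>J. iid_prob_on S w N (F j))"
    unfolding iid_prob_on_indicator[OF assms(1)] by (subst sum.swap) (rule sum_mono)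
  moreover have "iid_prob_on S w N E + (\<Sum>s\<in>{..<N} \<rightarrow>\<^sub>E S. if E s then 0 else ?W s)
                   = (\<Sum>s\<in>{..<N} \<rightarrow>\<^sub>E S. ?W s)"
    unfolding iid_prob_on_indicator[OF assms(1)] sum.distrib[symmetric] by (intro sum.cong) auto
  moreover have "(\<Sum>s\<in>{..<N} \<rightarrow>\<^sub>E S. ?W s) = 1"
    using sum_PiE_prod_eq_power[OF assms(1), where N=N and g=w] assms(3) by simp
  ultimately show ?thesis
    by linarith
qed

lemma exp_le_quadratic:
  fixes y :: real
  assumes "\<bar>y\<bar> \<le> 1"
  shows "exp y \<le> 1 + y + y\<^sup>2"
proof (cases "y \<ge> 0")
  case True
  then show ?thesis
    using exp_bound[of y] assms by simp
next
  case False
  have "(1 + y + y\<^sup>2) * (1 - y) = 1 - y ^ 3"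
    by (simp add: power2_eq_square power3_eq_cube algebra_simps)
  also have "\<dots> \<ge> 1"
    using False by (simp add: odd_power_less_zero less_imp_le)
  finally have "exp y * (1 - y) \<le> (1 + y + y\<^sup>2) * (1 - y)"
    using exp_ge_add_one_self[of "- y"] mult_left_mono[of "1 - y" "exp (- y)" "exp y"]
    by (simp add: exp_minus field_simps)
  then show ?thesis
    using False by (simp add: mult_le_cancel_right)
qed

lemma centred_mgf_le:
  fixes w f :: "'x \<Rightarrow> real"
  assumes "\<And>x. x \<in> S \<Longrightarrow> w x \<ge> 0" "(\<Sum>x\<in>S. w x) = 1" "(\<Sum>x\<in>S. w x * f x) = 0"
    and "\<And>x. x \<in> S \<Longrightarrow> \<bar>f x\<bar> \<le> 1" "\<bar>l\<bar> \<le> 1"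
  shows "(\<Sum>x\<in>S. w x * exp (l * f x)) \<le> exp (l\<^sup>2)"
proof -
  have "exp (l * f x) \<le> 1 + l * f x + l\<^sup>2" if "x \<in> S" for x
  proof -
    have "\<bar>f x\<bar> \<le> 1"
      using assms(4) that .
    then have "\<bar>l * f x\<bar> \<le> 1" "(l * f x)\<^sup>2 \<le> l\<^sup>2"
      using assms(5) by (auto simp: abs_mult power_mult_distrib mult_le_one abs_square_le_1 intro: mult_left_le)
    then show ?thesis
      using exp_le_quadratic[of "l * f x"] by linarith
  qed
  then have "(\<Sum>x\<in>S. w x * exp (l * f x)) \<le> (\<Sum>x\<in>S. w x * (1 + l * f x + l\<^sup>2))"
    using assms(1) by (intro sum_mono mult_left_mono) auto
  also have "\<dots> = (\<Sum>x\<in>S. w x) + l * (\<Sum>x\<in>S. w x * f x) + l\<^sup>2 * (\<Sum>x\<in>S. w x)"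
    by (simp add: algebra_simps sum.distrib sum_distrib_left sum_distrib_right)
  also have "\<dots> \<le> exp (l\<^sup>2)"
    using assms(2,3) exp_ge_add_one_self[of "l\<^sup>2"] by simp
  finally show ?thesis .
qed

lemma iid_mgf_le:
  fixes w f :: "'x \<Rightarrow> real" and l :: real
  assumes "finite S" "\<And>x. x \<in> S \<Longrightarrow> w x \<ge> 0" "(\<Sum>x\<in>S. w x) = 1" "(\<Sum>x\<in>S. w x * f x) = 0"
    and "\<And>x. x \<in> S \<Longrightarrow> \<bar>f x\<bar> \<le> 1" "\<bar>l\<bar> \<le> 1"
  shows "(\<Sum>s\<in>{..<N} \<rightarrow>\<^sub>E S. (\<Prod>k<N. w (s k)) * exp (l * (\<Sum>k<N. f (s k)))) \<le> exp (real N * l\<^sup>2)"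
proof -
  have "(\<Sum>s\<in>{..<N} \<rightarrow>\<^sub>E S. (\<Prod>k<N. w (s k)) * exp (l * (\<Sum>k<N. f (s k))))
          = (\<Sum>s\<in>{..<N} \<rightarrow>\<^sub>E S. \<Prod>k<N. w (s k) * exp (l * f (s k)))"
    unfolding sum_distrib_left exp_sum[OF finite_lessThan] prod.distrib ..
  also have "\<dots> = (\<Sum>x\<in>S. w x * exp (l * f x)) ^ N"
    by (rule sum_PiE_prod_eq_power[OF assms(1)])
  also have "\<dots> \<le> exp (l\<^sup>2) ^ N"
    using assms by (intro power_mono centred_mgf_le sum_nonneg) auto
  finally show ?thesis
    by (simp add: exp_of_nat_mult[symmetric])
qed

lemma one_le_two_sided_exp:
  fixes x c l :: real
  assumes "0 \<le> l" "c \<le> \<bar>x\<bar>"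
  shows "1 \<le> exp (l * (x - c)) + exp (l * (- x - c))"
proof (cases "x \<ge> 0")
  case True
  then have "1 \<le> exp (l * (x - c))"
    using assms by simp
  then show ?thesis
    using exp_ge_zero[of "l * (- x - c)"] by linarith
next
  case False
  then have "1 \<le> exp (l * (- x - c))"
    using assms by simp
  then show ?thesis
    using exp_ge_zero[of "l * (x - c)"] by linarith
qed

lemma two_sided_chernoff:
  fixes w f :: "'x \<Rightarrow> real"
  assumes "finite S" "\<And>x. x \<in> S \<Longrightarrow> w x \<ge> 0" "(\<Sum>x\<in>S. w x) = 1" "(\<Sum>x\<in>S. w x * f x) = 0"
    and "\<And>x. x \<in> S \<Longrightarrow> \<bar>f x\<bar> \<le> 1" "0 \<le> t" "t \<le> 2"
  shows "iid_prob_on S w N (\<lambda>s. \<bar>\<Sum>k<N. f (s k)\<bar> \<ge> N * t) \<le> 2 * exp (- (N * t\<^sup>2 / 4))"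
proof -
  define l where "l = t / 2"
  let ?W = "\<lambda>s. \<Prod>k<N. w (s k)" and ?X = "\<lambda>s. \<Sum>k<N. f (s k)"
  have l: "0 \<le> l" "\<bar>l\<bar> \<le> 1" "\<bar>- l\<bar> \<le> 1"
    using assms(6,7) by (auto simp: l_def)
  have "(if \<bar>?X s\<bar> \<ge> N * t then ?W s else 0)
          \<le> exp (- (l * N * t)) * (?W s * exp (l * ?X s) + ?W s * exp (- l * ?X s))"
    if "s \<in> {..<N} \<rightarrow>\<^sub>E S" for s
  proof -
    have "exp (- (l * N * t)) * (?W s * exp (l * ?X s) + ?W s * exp (- l * ?X s))
            = ?W s * (exp (l * (?X s - N * t)) + exp (l * (- ?X s - N * t)))"
      by (simp add: algebra_simps flip: exp_add)
    then show ?thesis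
      using prod_weights_nonneg[where S=S and w=w, OF assms(2) that] one_le_two_sided_exp[OF l(1)]
      by (auto simp: mult_le_cancel_left1 intro: add_nonneg_nonneg mult_nonneg_nonneg)
  qed
  then have "iid_prob_on S w N (\<lambda>s. \<bar>?X s\<bar> \<ge> N * t)
      \<le> exp (- (l * N * t)) * ((\<Sum>s\<in>{..<N} \<rightarrow>\<^sub>E S. ?W s * exp (l * ?X s))
                                + (\<Sum>s\<in>{..<N} \<rightarrow>\<^sub>E S. ?W s * exp (- l * ?X s)))"
    unfolding iid_prob_on_indicator[OF assms(1)] sum_distrib_left sum.distrib[symmetric]
    by (rule sum_mono)
  also have "\<dots> \<le> exp (- (l * N * t)) * (exp (real N * l\<^sup>2) + exp (real N * (- l)\<^sup>2))"
  proof -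
    have "(\<Sum>s\<in>{..<N} \<rightarrow>\<^sub>E S. ?W s * exp (l' * ?X s)) \<le> exp (real N * l'\<^sup>2)" if "\<bar>l'\<bar> \<le> 1" for l' :: real
      by (rule iid_mgf_le) (use assms that in auto)
    from this[of l] this[of "- l"] show ?thesis
      using l by (intro mult_left_mono add_mono) auto
  qed
  also have "\<dots> = 2 * exp (- (N * t\<^sup>2 / 4))"
    by (simp add: l_def power2_eq_square field_simps flip: exp_add)
  finally show ?thesis .
qed

lemma frequency_deviation:
  fixes w :: "'x \<Rightarrow> real"
  assumes "finite S" "\<And>x. x \<in> S \<Longrightarrow> w x \<ge> 0" "(\<Sum>x\<in>S. w x) = 1"
    and "0 \<le> t" "t \<le> 2" "N > 0"
  shows "iid_prob_on S w N
           (\<lambda>s. \<bar>real (card {k\<in>{..<N}. Q (s k)}) / N - (\<Sum>x\<in>{x\<in>S. Q x}. w x)\<bar> > t)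
         \<le> 2 * exp (- (N * t\<^sup>2 / 4))"
proof -
  define p where "p = (\<Sum>x\<in>{x\<in>S. Q x}. w x)"
  define f where "f x = (if Q x then 1 else 0) - p" for x
  have "p \<le> (\<Sum>x\<in>S. w x)"
    unfolding p_def using assms(1,2) by (intro sum_mono2) auto
  moreover have "p \<ge> 0"
    unfolding p_def using assms(2) by (intro sum_nonneg) auto
  ultimately have f_bound: "\<bar>f x\<bar> \<le> 1" for x
    using assms(3) by (simp add: f_def)
  have "w x * f x = (if Q x then w x else 0) - p * w x" for x
    by (simp add: f_def algebra_simps)
  then have "(\<Sum>x\<in>S. w x * f x) = (\<Sum>x\<in>S. if Q x then w x else 0) - p * (\<Sum>x\<in>S. w x)"
    by (simp add: sum_subtractf sum_distrib_left)
  then have f_centred: "(\<Sum>x\<in>S. w x * f x) = 0"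
    using assms(1,3) by (simp add: p_def sum.inter_filter)
  have sum_f: "(\<Sum>k<N. f (s k)) = real (card {k\<in>{..<N}. Q (s k)}) - N * p" for s
  proof -
    have "{..<N} \<inter> {k. Q (s k)} = {k\<in>{..<N}. Q (s k)}"
      by auto
    then show ?thesis
      by (simp add: f_def sum_subtractf sum.If_cases)
  qed
  have "real (card {k\<in>{..<N}. Q (s k)}) / N - p = (\<Sum>k<N. f (s k)) / N" for s
    using assms(6) by (simp add: sum_f field_simps)
  then have "\<bar>real (card {k\<in>{..<N}. Q (s k)}) / N - p\<bar> = \<bar>\<Sum>k<N. f (s k)\<bar> / N" for s
    by (simp add: abs_divide)
  then have "iid_prob_on S w N (\<lambda>s. \<bar>real (card {k\<in>{..<N}. Q (s k)}) / N - p\<bar> > t)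
               \<le> iid_prob_on S w N (\<lambda>s. \<bar>\<Sum>k<N. f (s k)\<bar> \<ge> N * t)"
    using assms(6) by (intro iid_prob_on_mono[OF assms(1,2)]) (auto simp: field_simps)
  also have "\<dots> \<le> 2 * exp (- (N * t\<^sup>2 / 4))"
    using f_bound f_centred by (intro two_sided_chernoff) (use assms in auto)
  finally show ?thesis
    unfolding p_def .
qed

lemma product_weight_marginals:
  fixes \<mu> \<nu> :: "nat \<Rightarrow> real"
  assumes "(\<Sum>a=1..m. \<mu> a) = 1" "(\<Sum>b=1..n. \<nu> b) = 1"
  shows "(\<Sum>x\<in>{1..m} \<times> {1..n}. \<mu> (fst x) * \<nu> (snd x)) = 1"
    and "a \<in> {1..m} \<Longrightarrow> (\<Sum>x\<in>{x\<in>{1..m} \<times> {1..n}. fst x = a}. \<mu> (fst x) * \<nu> (snd x)) = \<mu> a"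
    and "b \<in> {1..n} \<Longrightarrow> (\<Sum>x\<in>{x\<in>{1..m} \<times> {1..n}. snd x = b}. \<mu> (fst x) * \<nu> (snd x)) = \<nu> b"
proof -
  have product: "(\<Sum>x\<in>A \<times> B. \<mu> (fst x) * \<nu> (snd x)) = (\<Sum>a\<in>A. \<mu> a) * (\<Sum>b\<in>B. \<nu> b)" for A B
  proof -
    have "(\<Sum>x\<in>A \<times> B. \<mu> (fst x) * \<nu> (snd x)) = (\<Sum>a\<in>A. \<Sum>b\<in>B. \<mu> a * \<nu> b)"
      by (simp add: sum.cartesian_product split_def)
    then show ?thesis
      by (simp add: sum_product)
  qed
  show "(\<Sum>x\<in>{1..m} \<times> {1..n}. \<mu> (fst x) * \<nu> (snd x)) = 1"
    using assms by (simp add: product)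
  show "(\<Sum>x\<in>{x\<in>{1..m} \<times> {1..n}. fst x = a}. \<mu> (fst x) * \<nu> (snd x)) = \<mu> a" if "a \<in> {1..m}"
  proof -
    have "{x\<in>{1..m} \<times> {1..n}. fst x = a} = {a} \<times> {1..n}"
      using that by auto
    then show ?thesis
      using assms(2) by (simp add: product)
  qed
  show "(\<Sum>x\<in>{x\<in>{1..m} \<times> {1..n}. snd x = b}. \<mu> (fst x) * \<nu> (snd x)) = \<nu> b" if "b \<in> {1..n}"
  proof -
    have "{x\<in>{1..m} \<times> {1..n}. snd x = b} = {1..m} \<times> {b}"
      using that by auto
    then show ?thesis
      using assms(1) by (simp add: product)
  qed
qed

lemma frequencies_concentrate:
  assumes "\<And>a. a \<in> {1..m} \<Longrightarrow> \<mu> a \<ge> 0" "(\<Sum>a=1..m. \<mu> a) = 1"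
    and "\<And>b. b \<in> {1..n} \<Longrightarrow> \<nu> b \<ge> 0" "(\<Sum>b=1..n. \<nu> b) = 1"
    and "0 \<le> t" "t \<le> 2" "N > 0"
  shows "iid_prob m n N \<mu> \<nu> (\<lambda>s. close_profiles m n \<mu> \<nu> (freqA N s) (freqB N s) t)
           \<ge> 1 - 2 * real (m + n) * exp (- (N * t\<^sup>2 / 4))"
proof -
  let ?S = "{1..m} \<times> {1..n}" and ?w = "\<lambda>x. \<mu> (fst x) * \<nu> (snd x)"
  let ?e = "exp (- (N * t\<^sup>2 / 4))"
  define F where "F = case_sum (\<lambda>a s. \<bar>freqA N s a - \<mu> a\<bar> > t) (\<lambda>b s. \<bar>freqB N s b - \<nu> b\<bar> > t)"
  note marginals = product_weight_marginals[OF assms(2,4)]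
  have w_nonneg: "\<And>x. x \<in> ?S \<Longrightarrow> ?w x \<ge> 0"
    using assms(1,3) by auto
  have "iid_prob_on ?S ?w N (F (Inl a)) \<le> 2 * ?e" if "a \<in> {1..m}" for a
    using frequency_deviation[OF _ w_nonneg marginals(1) assms(5-7), where Q="\<lambda>x. fst x = a"]
      marginals(2)[OF that] by (simp add: F_def freqA_def)
  moreover have "iid_prob_on ?S ?w N (F (Inr b)) \<le> 2 * ?e" if "b \<in> {1..n}" for b
    using frequency_deviation[OF _ w_nonneg marginals(1) assms(5-7), where Q="\<lambda>x. snd x = b"]
      marginals(3)[OF that] by (simp add: F_def freqB_def)
  ultimately have "(\<Sum>j\<in>{1..m} <+> {1..n}. iid_prob_on ?S ?w N (F j))
                     \<le> (\<Sum>a=1..m. 2 * ?e) + (\<Sum>b=1..n. 2 * ?e)"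
    unfolding sum.Plus[OF finite_atLeastAtMost finite_atLeastAtMost] by (intro add_mono sum_mono) auto
  moreover have "iid_prob_on ?S ?w N (\<lambda>s. close_profiles m n \<mu> \<nu> (freqA N s) (freqB N s) t)
                   \<ge> 1 - (\<Sum>j\<in>{1..m} <+> {1..n}. iid_prob_on ?S ?w N (F j))"
    by (rule iid_prob_on_union_bound[OF _ w_nonneg marginals(1)])
       (auto simp: close_profiles_def F_def not_le intro: bexI[OF _ InlI] bexI[OF _ InrI])
  ultimately show ?thesis
    unfolding iid_prob_eq_iid_prob_on by (simp add: algebra_simps)
qed

lemma frequencies_concentrate_at_radius:
  assumes "\<And>a. a \<in> {1..m} \<Longrightarrow> \<mu> a \<ge> 0" "(\<Sum>a=1..m. \<mu> a) = 1"
    and "\<And>b. b \<in> {1..n} \<Longrightarrow> \<nu> b \<ge> 0" "(\<Sum>b=1..n. \<nu> b) = 1"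
    and "m \<ge> 1" "0 < \<delta>" "\<delta> < 1" "\<epsilon> > 0"
  obtains N0 :: nat where
    "\<And>N. N \<ge> N0 \<Longrightarrow> sqrt (4 * ln (2 * real (m + n) / \<delta>) / real N) \<le> \<epsilon>"
    "\<And>N. N \<ge> N0 \<Longrightarrow> iid_prob m n N \<mu> \<nu> (\<lambda>s. close_profiles m n \<mu> \<nu> (freqA N s) (freqB N s)
                                 (sqrt (4 * ln (2 * real (m + n) / \<delta>) / N))) \<ge> 1 - \<delta>"
proof -
  define L where "L = ln (2 * real (m + n) / \<delta>)"
  define N0 where "N0 = nat \<lceil>4 * L / min \<epsilon> 2 ^ 2\<rceil> + 1"
  have "L \<ge> 0"
    using assms(5-7) by (simp add: L_def)
  have radius: "sqrt (4 * L / N) \<le> min \<epsilon> 2" if "N \<ge> N0" for N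
  proof -
    have "4 * L / min \<epsilon> 2 ^ 2 \<le> N"
      using that by (simp add: N0_def) linarith
    then have "4 * L / N \<le> min \<epsilon> 2 ^ 2"
      using that assms(8) by (simp add: N0_def field_simps)
    then have "sqrt (4 * L / N) \<le> sqrt (min \<epsilon> 2 ^ 2)"
      by (rule real_sqrt_le_mono)
    then show ?thesis
      using assms(8) by simp
  qed
  have prob: "iid_prob m n N \<mu> \<nu> (\<lambda>s. close_profiles m n \<mu> \<nu> (freqA N s) (freqB N s) (sqrt (4 * L / N)))
                \<ge> 1 - \<delta>" if "N \<ge> N0" for N
  proof -
    have "N > 0"
      using that by (simp add: N0_def)
    have "(sqrt (4 * L / N))\<^sup>2 = 4 * L / N"
      using \<open>L \<ge> 0\<close> by simp
    then have "2 * real (m + n) * exp (- (N * (sqrt (4 * L / N))\<^sup>2 / 4)) = \<delta>"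
      using \<open>N > 0\<close> assms(5,6) by (simp add: L_def exp_minus)
    moreover have "iid_prob m n N \<mu> \<nu>
                     (\<lambda>s. close_profiles m n \<mu> \<nu> (freqA N s) (freqB N s) (sqrt (4 * L / N)))
                     \<ge> 1 - 2 * real (m + n) * exp (- (N * (sqrt (4 * L / N))\<^sup>2 / 4))"
      using radius[OF that] \<open>N > 0\<close> \<open>L \<ge> 0\<close> by (intro frequencies_concentrate[OF assms(1-4)]) auto
    ultimately show ?thesis
      by simp
  qed
  show thesis
    by (rule that) (use radius prob in \<open>auto simp: L_def\<close>)
qed

section \<open>Sample complexity\<close>

lemma squared_radius_le_rate:
  fixes K \<delta> :: real
  assumes "K \<ge> 0" "m \<ge> 1" "0 < \<delta>" "\<delta> < 1"
  shows "K * (sqrt (4 * ln (2 * real (m + n) / \<delta>) / N))\<^sup>2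
           \<le> (4 * K * (ln (2 * real (m + n)) + 1) + 1) *
              (real m ^ 2 + real n ^ 2 + real (m + n) * ln (1 / \<delta>)) / real N"
proof -
  define L0 where "L0 = ln (2 * real (m + n))"
  define L where "L = ln (1 / \<delta>)"
  define C where "C = 4 * K * (L0 + 1) + 1"
  have L: "L0 \<ge> 0" "L \<ge> 0" "ln (2 * real (m + n) / \<delta>) = L0 + L"
    using assms(2-4) by (auto simp: L0_def L_def ln_div)
  have C: "C \<ge> 4 * K * L0" "C \<ge> 4 * K"
    using assms(1) L(1) by (auto simp: C_def algebra_simps)
  have "real m ^ 2 \<ge> 1" "real (m + n) \<ge> 1"
    using assms(2) by (auto intro: one_le_power)
  then have "real m ^ 2 + real n ^ 2 \<ge> 1" "real (m + n) \<ge> 1"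
    using zero_le_power2[of "real n"] by linarith+
  moreover have "C \<ge> 0"
    using C(2) assms(1) by linarith
  ultimately have "4 * K * L0 \<le> C * (real m ^ 2 + real n ^ 2)" "4 * K * L \<le> C * (real (m + n) * L)"
    using C L(2) mult_left_mono[of 1 "real m ^ 2 + real n ^ 2" C]
      mult_right_mono[OF C(2) L(2)] mult_left_mono[of L "real (m + n) * L" C]
      mult_right_mono[of 1 "real (m + n)" L]
    by linarith+
  then have "4 * K * L0 + 4 * K * L \<le> C * (real m ^ 2 + real n ^ 2) + C * (real (m + n) * L)"
    by (rule add_mono)
  then have "K * (4 * (L0 + L)) \<le> C * (real m ^ 2 + real n ^ 2 + real (m + n) * L)"
    by (simp add: algebra_simps)
  then show ?thesis
    using L by (simp add: C_def L0_def L_def divide_right_mono)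
qed

lemma QRE_estimator_concentration:
  fixes \<phi> :: "nat \<Rightarrow> nat \<Rightarrow> 'v::euclidean_space"
  assumes "m \<ge> 2" "n \<ge> 2" "\<eta> > 0"
    and rank: "stacked_rank m n \<phi> \<mu> \<nu> = DIM('v)"
    and qre: "is_QRE m n \<eta> (linQ \<phi> \<theta>) \<mu> \<nu>"
  obtains K where "K \<ge> 0"
    and "\<And>\<delta> B. 0 < \<delta> \<Longrightarrow> \<delta> < 1 \<Longrightarrow>
           (\<And>N. K * (sqrt (4 * ln (2 * real (m + n) / \<delta>) / real N))\<^sup>2 \<le> B N) \<Longrightarrow>
           \<exists>N0. \<forall>N\<ge>N0. iid_prob m n N \<mu> \<nu>
                          (\<lambda>s. ls_estimate_within m n \<eta> \<phi> \<theta> (freqA N s) (freqB N s) (B N)) \<ge> 1 - \<delta>"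
proof -
  obtain K \<epsilon> where "K \<ge> 0" "\<epsilon> > 0" and stable: "\<And>\<mu>h \<nu>h t. 0 \<le> t \<Longrightarrow> t \<le> \<epsilon> \<Longrightarrow>
      close_profiles m n \<mu> \<nu> \<mu>h \<nu>h t \<Longrightarrow> ls_estimate_within m n \<eta> \<phi> \<theta> \<mu>h \<nu>h (K * t\<^sup>2)"
    using QRE_least_squares_stability[OF assms] by blast
  have \<mu>: "\<And>a. a \<in> {1..m} \<Longrightarrow> \<mu> a \<ge> 0" "(\<Sum>a=1..m. \<mu> a) = 1"
    and \<nu>: "\<And>b. b \<in> {1..n} \<Longrightarrow> \<nu> b \<ge> 0" "(\<Sum>b=1..n. \<nu> b) = 1"
    using is_QRE_simplex[OF qre] assms(1,2) by (auto intro: less_imp_le)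
  have "\<exists>N0. \<forall>N\<ge>N0. iid_prob m n N \<mu> \<nu>
                       (\<lambda>s. ls_estimate_within m n \<eta> \<phi> \<theta> (freqA N s) (freqB N s) (B N)) \<ge> 1 - \<delta>"
    if \<delta>: "0 < \<delta>" "\<delta> < 1" and B: "\<And>N. K * (sqrt (4 * ln (2 * real (m + n) / \<delta>) / real N))\<^sup>2 \<le> B N"
    for \<delta> B
  proof -
    let ?r = "\<lambda>N. sqrt (4 * ln (2 * real (m + n) / \<delta>) / real N)"
    obtain N0 where radius: "\<And>N. N \<ge> N0 \<Longrightarrow> ?r N \<le> \<epsilon>"
      and prob: "\<And>N. N \<ge> N0 \<Longrightarrow>
                   iid_prob m n N \<mu> \<nu> (\<lambda>s. close_profiles m n \<mu> \<nu> (freqA N s) (freqB N s) (?r N)) \<ge> 1 - \<delta>"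
      using frequencies_concentrate_at_radius[where \<mu>=\<mu> and \<nu>=\<nu>, OF \<mu> \<nu> _ \<delta> \<open>\<epsilon> > 0\<close>] assms(1)
      by auto
    have "0 \<le> ?r N" for N
      using \<delta> assms(1) by (simp add: field_simps)
    then have "ls_estimate_within m n \<eta> \<phi> \<theta> (freqA N s) (freqB N s) (B N)"
      if "N \<ge> N0" "close_profiles m n \<mu> \<nu> (freqA N s) (freqB N s) (?r N)" for N s
      using stable[OF _ radius[OF that(1)] that(2)] B by (blast intro: ls_estimate_within_mono)
    then show ?thesis
      using \<mu>(1) \<nu>(1) by (blast intro: order_trans[OF prob iid_prob_mono])
  qed
  with \<open>K \<ge> 0\<close> show thesis
    by (rule that)
qed

theorem mainTheorem3:
  fixes m n :: nat and \<eta> :: real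
    and \<phi> :: "nat \<Rightarrow> nat \<Rightarrow> 'v::euclidean_space"
    and \<mu>s \<nu>s :: "nat \<Rightarrow> real"
  assumes "m \<ge> 2" and "n \<ge> 2" and "\<eta> > 0"
  shows "\<exists>C>0. \<forall>\<theta>s M. norm \<theta>s ^ 2 \<le> M \<longrightarrow>
      is_QRE m n \<eta> (linQ \<phi> \<theta>s) \<mu>s \<nu>s \<longrightarrow>
      stacked_rank m n \<phi> \<mu>s \<nu>s = DIM('v) \<longrightarrow>
      (\<forall>\<delta>. 0 < \<delta> \<and> \<delta> < 1 \<longrightarrow>
        (\<exists>N0. \<forall>N\<ge>N0.
          iid_prob m n N \<mu>s \<nu>s
            (\<lambda>s. (\<forall>a\<in>{1..m}. freqA N s a > 0) \<and> (\<forall>b\<in>{1..n}. freqB N s b > 0) \<and>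
                 (\<forall>\<theta>h. (\<forall>\<theta>. ls_obj m n \<eta> \<phi> (freqA N s) (freqB N s) \<theta>h
                              \<le> ls_obj m n \<eta> \<phi> (freqA N s) (freqB N s) \<theta>) \<longrightarrow>
                    frob_dist2 m n (linQ \<phi> \<theta>h) (linQ \<phi> \<theta>s)
                      \<le> C * (real m ^ 2 + real n ^ 2 + real (m + n) * ln (1 / \<delta>)) / real N))
          \<ge> 1 - \<delta>))"
proof (cases "\<exists>\<theta>. is_QRE m n \<eta> (linQ \<phi> \<theta>) \<mu>s \<nu>s \<and> stacked_rank m n \<phi> \<mu>s \<nu>s = DIM('v)")
  case False
  then show ?thesis
    by (intro exI[of _ 1]) auto
next
  case True
  then obtain \<theta>0 where qre0: "is_QRE m n \<eta> (linQ \<phi> \<theta>0) \<mu>s \<nu>s"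
    and rank: "stacked_rank m n \<phi> \<mu>s \<nu>s = DIM('v)"
    by blast
  obtain K where "K \<ge> 0" and concentration: "\<And>\<delta> B. 0 < \<delta> \<Longrightarrow> \<delta> < 1 \<Longrightarrow>
      (\<And>N. K * (sqrt (4 * ln (2 * real (m + n) / \<delta>) / real N))\<^sup>2 \<le> B N) \<Longrightarrow>
      \<exists>N0. \<forall>N\<ge>N0. iid_prob m n N \<mu>s \<nu>s
                     (\<lambda>s. ls_estimate_within m n \<eta> \<phi> \<theta>0 (freqA N s) (freqB N s) (B N)) \<ge> 1 - \<delta>"
    using QRE_estimator_concentration[OF assms rank qre0] by blast
  define C where "C = 4 * K * (ln (2 * real (m + n)) + 1) + 1"
  have "C > 0"
    using \<open>K \<ge> 0\<close> assms(1) by (simp add: C_def add_nonneg_pos)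
  have "\<exists>N0. \<forall>N\<ge>N0. iid_prob m n N \<mu>s \<nu>s (\<lambda>s. ls_estimate_within m n \<eta> \<phi> \<theta>0 (freqA N s) (freqB N s)
          (C * (real m ^ 2 + real n ^ 2 + real (m + n) * ln (1 / \<delta>)) / real N)) \<ge> 1 - \<delta>"
    if "0 < \<delta>" "\<delta> < 1" for \<delta>
    using that assms(1) unfolding C_def by (intro concentration squared_radius_le_rate \<open>K \<ge> 0\<close>) auto
  with \<open>C > 0\<close> show ?thesis
    using is_QRE_parameter_unique[OF rank assms(3) _ qre0] unfolding ls_estimate_within_def
    by (intro exI[of _ C] conjI allI impI) auto
qed

end
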